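(* Let $X$ be a $T_0$ topological space which is $k$-bounded sober. Then the following are equivalent: (i) the convergence class $\mathcal{I}$ of $\operatorname{Irr}$-convergence on $X$ is topological; (ii) $X$ is $\operatorname{Irr}$-continuous.
   Context: For a topological space $X$, a nonempty subset $E\subseteq X$ is irreducible if whenever $E\subseteq A_1\cup A_2$ with $A_1,A_2$ closed, then $E\subseteq A_1$ or $E\subseteq A_2$. The specialisation order is $x\le y$ iff $x\in\operatorname{cl}(\{y\})$; $\uparrow x=\{z: z\ge x\}$; suprema $\bigvee$ are least upper bounds with respect to this order. $\operatorname{Irr}^+(X)$ denotes the set of irreducible subsets of $X$ whose supremum exists. $X$ is $k$-bounded sober if every closed set $F\in\operatorname{Irr}^+(X)$ is the closure of a unique singleton. The $\operatorname{Irr}$-way-below relation: $x\ll_{\operatorname{Irr}} y$ iff for every $E\in\operatorname{Irr}^+(X)$ with $\bigvee E\ge y$ one has $E\cap\uparrow x\neq\emptyset$; write $\twoheaddownarrow_{\operatorname{Irr}} x=\{y: y\ll_{\operatorname{Irr}} x\}$. $X$ is $\operatorname{Irr}$-continuous if for every $x\in X$, $\twoheaddownarrow_{\operatorname{Irr}} x$ is irreducible in $X$ and $x=\bigvee\twoheaddownarrow_{\operatorname{Irr}} x$. A net $(x_i)_{i\in I}$ in $X$ is a map from a preorder $(I,\le)$ to $X$. A net $(x_i)_{i\in I}$ $\operatorname{Irr}$-converges to $y$ if there is $E\in\operatorname{Irr}^+(X)$ with $\bigvee E\ge y$ such that for each $e\in E$ there is $k(e)\in I$ with $x_i\ge e$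 for all $i\ge k(e)$. $\mathcal{I}$ is the relation between nets in $X$ and points of $X$ consisting of all pairs $((x_i)_{i\in I},y)$ with $(x_i)$ $\operatorname{Irr}$-converging to $y$. A convergence class $\mathcal{S}$ on $X$ is topological if there is a topology $\sigma$ on $X$ such that $((x_i),x)\in\mathcal{S}$ iff for every $U\in\sigma$ with $x\in U$ there is $i_0$ with $x_i\in U$ for all $i\ge i_0$. *)

theory Defs
  imports "HOL-Analysis.Analysis"
begin

definition spec_le :: "'a topology \<Rightarrow> 'a \<Rightarrow> 'a \<Rightarrow> bool" where
  "spec_le X x y \<longleftrightarrow> x \<in> topspace X \<and> y \<in> topspace X \<and> x \<in> X closure_of {y}"

definition spec_up :: "'a topology \<Rightarrow> 'a \<Rightarrow> 'a set" where
  "spec_up X x = {z \<in> topspace X. spec_le X x z}"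

definition is_spec_sup :: "'a topology \<Rightarrow> 'a set \<Rightarrow> 'a \<Rightarrow> bool" where
  "is_spec_sup X E s \<longleftrightarrow> s \<in> topspace X \<and> (\<forall>e\<in>E. spec_le X e s) \<and>
     (\<forall>u\<in>topspace X. (\<forall>e\<in>E. spec_le X e u) \<longrightarrow> spec_le X s u)"

definition spec_sup :: "'a topology \<Rightarrow> 'a set \<Rightarrow> 'a" where
  "spec_sup X E = (THE s. is_spec_sup X E s)"

definition irreducible_in :: "'a topology \<Rightarrow> 'a set \<Rightarrow> bool" where
  "irreducible_in X E \<longleftrightarrow> E \<noteq> {} \<and> E \<subseteq> topspace X \<and>
     (\<forall>A1 A2. closedin X A1 \<and> closedin X A2 \<and> E \<subseteq> A1 \<union> A2 \<longrightarrow> E \<subseteq> A1 \<or> E \<subseteq> A2)"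

definition Irr_plus :: "'a topology \<Rightarrow> 'a set set" where
  "Irr_plus X = {E. irreducible_in X E \<and> (\<exists>s. is_spec_sup X E s)}"

definition k_bounded_sober :: "'a topology \<Rightarrow> bool" where
  "k_bounded_sober X \<longleftrightarrow> (\<forall>F. closedin X F \<and> F \<in> Irr_plus X \<longrightarrow>
     (\<exists>!x. x \<in> topspace X \<and> F = X closure_of {x}))"

definition Irr_way_below :: "'a topology \<Rightarrow> 'a \<Rightarrow> 'a \<Rightarrow> bool" where
  "Irr_way_below X x y \<longleftrightarrow> x \<in> topspace X \<and> y \<in> topspace X \<and>
     (\<forall>E\<in>Irr_plus X. spec_le X y (spec_sup X E) \<longrightarrow> E \<inter> spec_up X x \<noteq> {})"

definition Irr_waydown :: "'a topology \<Rightarrow> 'a \<Rightarrow> 'a set" where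
  "Irr_waydown X x = {y \<in> topspace X. Irr_way_below X y x}"

definition Irr_continuous :: "'a topology \<Rightarrow> bool" where
  "Irr_continuous X \<longleftrightarrow> (\<forall>x\<in>topspace X.
     irreducible_in X (Irr_waydown X x) \<and> is_spec_sup X (Irr_waydown X x) x)"

definition is_net :: "'a topology \<Rightarrow> 'i set \<Rightarrow> ('i \<Rightarrow> 'i \<Rightarrow> bool) \<Rightarrow> ('i \<Rightarrow> 'a) \<Rightarrow> bool" where
  "is_net X I le f \<longleftrightarrow> (\<forall>i\<in>I. le i i) \<and>
     (\<forall>i\<in>I. \<forall>j\<in>I. \<forall>k\<in>I. le i j \<and> le j k \<longrightarrow> le i k) \<and> f ` I \<subseteq> topspace X"

definition Irr_converges :: "'a topology \<Rightarrow> 'i set \<Rightarrow> ('i \<Rightarrow> 'i \<Rightarrow> bool) \<Rightarrow> ('i \<Rightarrow> 'a) \<Rightarrow> 'a \<Rightarrow> bool" where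
  "Irr_converges X I le f y \<longleftrightarrow> (\<exists>E\<in>Irr_plus X. spec_le X y (spec_sup X E) \<and>
     (\<forall>e\<in>E. \<exists>k\<in>I. \<forall>i\<in>I. le k i \<longrightarrow> spec_le X e (f i)))"

text \<open>The convergence class I restricted to nets whose index set lives in the type 'i is topological.\<close>
definition Irr_conv_topological :: "'a topology \<Rightarrow> 'i itself \<Rightarrow> bool" where
  "Irr_conv_topological X _ \<longleftrightarrow> (\<exists>\<sigma>::'a topology. topspace \<sigma> = topspace X \<and>
     (\<forall>(I::'i set) le f y. is_net X I le f \<and> y \<in> topspace X \<longrightarrow>
        (Irr_converges X I le f y \<longleftrightarrow>
          (\<forall>U. openin \<sigma> U \<and> y \<in> U \<longrightarrow> (\<exists>i0\<in>I. \<forall>i\<in>I. le i0 i \<longrightarrow> f i \<in> U)))))"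

end

theory Submission
  imports Defs
begin

text \<open>
  For (ii) \<Longrightarrow> (i), the topology is the Irr-topology, whose open sets are the upper sets U such
  that every E in Irr+ with supremum in U meets U; T0 and irreducibility make it closed
  under finite intersections. Irr-convergence to y implies convergence in it outright, and
  conversely the witness \<twoheaddownarrow>y works because the sets {z. e \<ll> z} are Irr-open: this is the
  interpolation property of \<ll>, which uses k-bounded sobriety to show that a union of the
  irreducible sets \<twoheaddownarrow>z over z \<ll> s is irreducible.

  For (i) \<Longrightarrow> (ii), testing the convergence class on constant nets and on nets indexed by a
  set E shows that every open set of the inducing topology is Irr-open. The net of pointed
  open neighbourhoods of x converges to x, so it Irr-converges, and its witness E consists
  of points lying below a whole open neighbourhood of x, hence way below x. Then \<twoheaddownarrow>x has
  the same closure as E, so it is irreducible, and its supremum is x.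
\<close>

section \<open>Specialisation order, suprema and irreducible sets\<close>

lemma spec_le_topspace: "spec_le X x y \<Longrightarrow> x \<in> topspace X \<and> y \<in> topspace X"
  by (simp add: spec_le_def)

lemma spec_le_refl: "x \<in> topspace X \<Longrightarrow> spec_le X x x"
  unfolding spec_le_def using closure_of_subset[of "{x}" X] by auto

lemma closure_of_singleton_mono: "y \<in> X closure_of {z} \<Longrightarrow> X closure_of {y} \<subseteq> X closure_of {z}"
  by (rule closure_of_minimal) auto

lemma spec_le_trans:
  assumes "spec_le X x y" "spec_le X y z"
  shows "spec_le X x z"
  using assms closure_of_singleton_mono[of y X z] unfolding spec_le_def by auto

lemma spec_le_antisym:
  assumes "t0_space X" "spec_le X x y" "spec_le X y x"
  shows "x = y"
proof -
  have "X closure_of {x} \<subseteq> X closure_of {y}" "X closure_of {y} \<subseteq> X closure_of {x}"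
    using assms(2,3) closure_of_singleton_mono[of x X y] closure_of_singleton_mono[of y X x]
    unfolding spec_le_def by auto
  then show ?thesis using assms unfolding t0_space_closure_of_sing spec_le_def by auto
qed

lemma spec_upper_bound_iff_closure_of:
  assumes "G \<subseteq> topspace X" "u \<in> topspace X"
  shows "(\<forall>g\<in>G. spec_le X g u) \<longleftrightarrow> X closure_of G \<subseteq> X closure_of {u}"
proof
  assume "\<forall>g\<in>G. spec_le X g u"
  then show "X closure_of G \<subseteq> X closure_of {u}"
    by (intro closure_of_minimal) (auto simp: spec_le_def)
next
  assume "X closure_of G \<subseteq> X closure_of {u}"
  then show "\<forall>g\<in>G. spec_le X g u"
    using closure_of_subset[OF assms(1)] assms by (auto simp: spec_le_def)
qed

lemma is_spec_sup_closure_of_eq: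
  assumes "is_spec_sup X E s" "E \<subseteq> topspace X" "F \<subseteq> topspace X"
    and "X closure_of F = X closure_of E"
  shows "is_spec_sup X F s"
proof -
  have "(\<forall>g\<in>F. spec_le X g u) \<longleftrightarrow> (\<forall>g\<in>E. spec_le X g u)" if "u \<in> topspace X" for u
    using spec_upper_bound_iff_closure_of[OF assms(2) that]
      spec_upper_bound_iff_closure_of[OF assms(3) that] assms(4) by simp
  then show ?thesis using assms(1) unfolding is_spec_sup_def by simp
qed

lemma is_spec_sup_unique:
  assumes "t0_space X" "is_spec_sup X E s" "is_spec_sup X E t"
  shows "s = t"
proof -
  have "spec_le X s t" "spec_le X t s" using assms(2,3) unfolding is_spec_sup_def by auto
  then show ?thesis by (rule spec_le_antisym[OF assms(1)])
qed

lemma spec_sup_eq: "t0_space X \<Longrightarrow> is_spec_sup X E s \<Longrightarrow> spec_sup X E = s"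
  unfolding spec_sup_def by (rule the_equality) (auto intro: is_spec_sup_unique)

lemma irreducible_inD:
  "irreducible_in X E \<Longrightarrow> closedin X A1 \<Longrightarrow> closedin X A2 \<Longrightarrow> E \<subseteq> A1 \<union> A2 \<Longrightarrow> E \<subseteq> A1 \<or> E \<subseteq> A2"
  unfolding irreducible_in_def by auto

lemma irreducible_in_subset_topspace: "irreducible_in X E \<Longrightarrow> E \<subseteq> topspace X"
  unfolding irreducible_in_def by auto

lemma irreducible_in_closure_of_eq:
  assumes "irreducible_in X E" "F \<subseteq> topspace X" "X closure_of F = X closure_of E"
  shows "irreducible_in X F"
  unfolding irreducible_in_def
proof (intro conjI allI impI assms(2))
  have E: "E \<noteq> {}" "E \<subseteq> X closure_of E"
    using assms(1) closure_of_subset unfolding irreducible_in_def by auto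
  then show "F \<noteq> {}" using assms(3) by auto
  have closed_superset: "E \<subseteq> A \<longleftrightarrow> F \<subseteq> A" if "closedin X A" for A
  proof -
    have "E \<subseteq> A \<longleftrightarrow> X closure_of E \<subseteq> A"
      using E(2) closure_of_minimal[OF _ that] by blast
    moreover have "F \<subseteq> A \<longleftrightarrow> X closure_of F \<subseteq> A"
      using closure_of_subset[OF assms(2)] closure_of_minimal[OF _ that] by blast
    ultimately show ?thesis using assms(3) by simp
  qed
  fix A1 A2 assume A: "closedin X A1 \<and> closedin X A2 \<and> F \<subseteq> A1 \<union> A2"
  then have "E \<subseteq> A1 \<union> A2" using closed_superset[of "A1 \<union> A2"] by auto
  then have "E \<subseteq> A1 \<or> E \<subseteq> A2" using irreducible_inD[OF assms(1)] A by auto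
  then show "F \<subseteq> A1 \<or> F \<subseteq> A2" using closed_superset A by auto
qed

lemma singleton_in_Irr_plus:
  assumes "v \<in> topspace X"
  shows "{v} \<in> Irr_plus X" and "is_spec_sup X {v} v"
proof -
  show sup: "is_spec_sup X {v} v" using assms unfolding is_spec_sup_def by (simp add: spec_le_refl)
  have "irreducible_in X {v}" using assms unfolding irreducible_in_def by simp
  then show "{v} \<in> Irr_plus X" using sup unfolding Irr_plus_def by auto
qed

lemma spec_sup_in_closedin:
  assumes t0: "t0_space X" and kb: "k_bounded_sober X"
    and irr: "irreducible_in X E" and sup: "is_spec_sup X E z"
    and A: "closedin X A" "E \<subseteq> A"
  shows "z \<in> A"
proof -
  let ?F = "X closure_of E"
  have F: "?F \<subseteq> topspace X" by (rule closure_of_subset_topspace)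
  have supF: "is_spec_sup X ?F z"
    using is_spec_sup_closure_of_eq[OF sup irreducible_in_subset_topspace[OF irr] F] by simp
  have "?F \<in> Irr_plus X"
    using irreducible_in_closure_of_eq[OF irr F] supF unfolding Irr_plus_def by auto
  then have "\<exists>!c. c \<in> topspace X \<and> ?F = X closure_of {c}"
    using kb unfolding k_bounded_sober_def by simp
  then obtain c where c: "c \<in> topspace X" "?F = X closure_of {c}" by auto
  have c_in: "c \<in> X closure_of {c}" using closure_of_subset[of "{c}" X] c(1) by auto
  have "is_spec_sup X ?F c"
    unfolding is_spec_sup_def
  proof (intro conjI ballI impI c(1))
    show "spec_le X e c" if "e \<in> ?F" for e
      using that c F unfolding spec_le_def by auto
    show "spec_le X c u" if "u \<in> topspace X" "\<forall>e\<in>?F. spec_le X e u" for u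
      using that c c_in by auto
  qed
  then have "z \<in> ?F" using is_spec_sup_unique[OF t0 supF] c c_in by auto
  then show ?thesis using closure_of_minimal[OF A(2,1)] by auto
qed

section \<open>The Irr-way-below relation and the Irr-topology\<close>

lemma Irr_way_below_topspace: "Irr_way_below X x y \<Longrightarrow> x \<in> topspace X \<and> y \<in> topspace X"
  by (simp add: Irr_way_below_def)

lemma Irr_way_below_imp_spec_le:
  assumes t0: "t0_space X" and xy: "Irr_way_below X x y"
  shows "spec_le X x y"
proof -
  have y: "y \<in> topspace X" using xy by (simp add: Irr_way_below_def)
  have "spec_sup X {y} = y" by (rule spec_sup_eq[OF t0 singleton_in_Irr_plus(2)[OF y]])
  then have "{y} \<inter> spec_up X x \<noteq> {}"
    using xy singleton_in_Irr_plus(1)[OF y] spec_le_refl[OF y] unfolding Irr_way_below_def by auto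
  then show ?thesis unfolding spec_up_def by auto
qed

lemma Irr_way_below_spec_le_trans:
  assumes "Irr_way_below X x y" "spec_le X y z"
  shows "Irr_way_below X x z"
  using assms spec_le_trans[OF assms(2)] spec_le_topspace[OF assms(2)]
  unfolding Irr_way_below_def by blast

lemma spec_le_Irr_way_below_trans:
  assumes "spec_le X w x" "Irr_way_below X x y"
  shows "Irr_way_below X w y"
proof -
  have "spec_up X x \<subseteq> spec_up X w"
    unfolding spec_up_def using spec_le_trans[OF assms(1)] by blast
  then show ?thesis
    using assms spec_le_topspace[OF assms(1)] unfolding Irr_way_below_def by blast
qed

definition irr_open :: "'a topology \<Rightarrow> 'a set \<Rightarrow> bool" where
  "irr_open X U \<longleftrightarrow> U \<subseteq> topspace X \<and> (\<forall>u\<in>U. \<forall>v. spec_le X u v \<longrightarrow> v \<in> U) \<and>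
     (\<forall>E\<in>Irr_plus X. spec_sup X E \<in> U \<longrightarrow> E \<inter> U \<noteq> {})"

lemma irr_openD:
  assumes "irr_open X U"
  shows "U \<subseteq> topspace X" and "\<And>u v. u \<in> U \<Longrightarrow> spec_le X u v \<Longrightarrow> v \<in> U"
    and "\<And>E. E \<in> Irr_plus X \<Longrightarrow> spec_sup X E \<in> U \<Longrightarrow> E \<inter> U \<noteq> {}"
  using assms unfolding irr_open_def by auto

lemma irr_openI:
  assumes "U \<subseteq> topspace X" "\<And>u v. u \<in> U \<Longrightarrow> spec_le X u v \<Longrightarrow> v \<in> U"
    and "\<And>E. E \<in> Irr_plus X \<Longrightarrow> spec_sup X E \<in> U \<Longrightarrow> E \<inter> U \<noteq> {}"
  shows "irr_open X U"
  using assms unfolding irr_open_def by auto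

lemma Irr_plus_closure_of_eq:
  assumes t0: "t0_space X" and E: "E \<in> Irr_plus X"
    and F: "F \<subseteq> topspace X" "X closure_of F = X closure_of E"
  shows "F \<in> Irr_plus X" and "spec_sup X F = spec_sup X E"
proof -
  obtain s where s: "is_spec_sup X E s" and irr: "irreducible_in X E"
    using E unfolding Irr_plus_def by auto
  have sF: "is_spec_sup X F s"
    by (rule is_spec_sup_closure_of_eq[OF s irreducible_in_subset_topspace[OF irr] F])
  show "F \<in> Irr_plus X"
    using irreducible_in_closure_of_eq[OF irr F] sF unfolding Irr_plus_def by auto
  show "spec_sup X F = spec_sup X E" using spec_sup_eq[OF t0 s] spec_sup_eq[OF t0 sF] by simp
qed

lemma irr_open_not_subset_closure_of_Diff:
  assumes t0: "t0_space X" and W: "irr_open X W"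
    and E: "E \<in> Irr_plus X" "spec_sup X E \<in> W"
  shows "\<not> E \<subseteq> X closure_of (E - W)"
proof
  assume sub: "E \<subseteq> X closure_of (E - W)"
  have Et: "E \<subseteq> topspace X"
    using E(1) irreducible_in_subset_topspace unfolding Irr_plus_def by auto
  have "X closure_of (E - W) = X closure_of E"
    using closure_of_mono[of "E - W" E X] closure_of_minimal[OF sub closedin_closure_of] by auto
  moreover have "E - W \<subseteq> topspace X" using Et by auto
  ultimately have "E - W \<in> Irr_plus X" "spec_sup X (E - W) \<in> W"
    using Irr_plus_closure_of_eq[OF t0 E(1)] E(2) by auto
  then show False using irr_openD(3)[OF W] by blast
qed

lemma irr_open_Int:
  assumes t0: "t0_space X" and U: "irr_open X U" and V: "irr_open X V"
  shows "irr_open X (U \<inter> V)"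
proof (rule irr_openI)
  show "U \<inter> V \<subseteq> topspace X" using irr_openD(1)[OF U] by auto
  show "v \<in> U \<inter> V" if "u \<in> U \<inter> V" "spec_le X u v" for u v
    using irr_openD(2)[OF U, of u v] irr_openD(2)[OF V, of u v] that by simp
  fix E assume E: "E \<in> Irr_plus X" "spec_sup X E \<in> U \<inter> V"
  show "E \<inter> (U \<inter> V) \<noteq> {}"
  proof
    assume disjoint: "E \<inter> (U \<inter> V) = {}"
    have irr: "irreducible_in X E" using E(1) unfolding Irr_plus_def by simp
    have "E \<subseteq> X closure_of (E - U) \<union> X closure_of (E - V)"
      using disjoint irreducible_in_subset_topspace[OF irr]
        closure_of_subset[of "E - U" X] closure_of_subset[of "E - V" X] by auto
    then have "E \<subseteq> X closure_of (E - U) \<or> E \<subseteq> X closure_of (E - V)"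
      by (rule irreducible_inD[OF irr closedin_closure_of closedin_closure_of])
    then show False
      using irr_open_not_subset_closure_of_Diff[OF t0 U E(1)]
        irr_open_not_subset_closure_of_Diff[OF t0 V E(1)] E(2) by auto
  qed
qed

lemma irr_open_Union:
  assumes "\<And>K. K \<in> \<K> \<Longrightarrow> irr_open X K"
  shows "irr_open X (\<Union>\<K>)"
proof (rule irr_openI)
  show "\<Union>\<K> \<subseteq> topspace X" using irr_openD(1)[OF assms] by blast
  show "v \<in> \<Union>\<K>" if "u \<in> \<Union>\<K>" "spec_le X u v" for u v
    using that irr_openD(2)[OF assms] by blast
  show "E \<inter> \<Union>\<K> \<noteq> {}" if "E \<in> Irr_plus X" "spec_sup X E \<in> \<Union>\<K>" for E
    using that irr_openD(3)[OF assms] by blast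
qed

definition irr_topology :: "'a topology \<Rightarrow> 'a topology" where
  "irr_topology X = topology (irr_open X)"

lemma openin_irr_topology:
  assumes "t0_space X"
  shows "openin (irr_topology X) = irr_open X"
proof -
  have "istopology (irr_open X)"
    unfolding istopology_def using irr_open_Int[OF assms] irr_open_Union by metis
  then show ?thesis unfolding irr_topology_def by simp
qed

lemma topspace_irr_topology:
  assumes "t0_space X"
  shows "topspace (irr_topology X) = topspace X"
proof -
  have "irr_open X (topspace X)"
    by (rule irr_openI) (auto dest: spec_le_topspace simp: Irr_plus_def irreducible_in_def)
  then show ?thesis
    unfolding topspace_def openin_irr_topology[OF assms] using irr_openD(1) by auto
qed

section \<open>Interpolation in Irr-continuous spaces\<close>

lemma spec_le_closedin: "spec_le X x y \<Longrightarrow> closedin X A \<Longrightarrow> y \<in> A \<Longrightarrow> x \<in> A"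
  unfolding spec_le_def using closure_of_minimal[of "{y}" A X] by auto

lemma Irr_waydown_subset_topspace: "Irr_waydown X x \<subseteq> topspace X"
  unfolding Irr_waydown_def by auto

lemma Irr_continuousD:
  assumes "Irr_continuous X" "x \<in> topspace X"
  shows "irreducible_in X (Irr_waydown X x)" and "is_spec_sup X (Irr_waydown X x) x"
  using assms unfolding Irr_continuous_def by auto

lemma is_spec_sup_UN:
  assumes W: "is_spec_sup X W s"
    and F: "\<And>z. z \<in> W \<Longrightarrow> is_spec_sup X (F z) z"
  shows "is_spec_sup X (\<Union>z\<in>W. F z) s"
  unfolding is_spec_sup_def
proof (intro conjI ballI impI)
  show "s \<in> topspace X" using W unfolding is_spec_sup_def by simp
  fix d assume "d \<in> (\<Union>z\<in>W. F z)"
  then obtain z where z: "z \<in> W" "d \<in> F z" by blast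
  have "spec_le X d z" using F[OF z(1)] z(2) unfolding is_spec_sup_def by simp
  moreover have "spec_le X z s" using W z(1) unfolding is_spec_sup_def by simp
  ultimately show "spec_le X d s" by (rule spec_le_trans)
next
  fix u assume u: "u \<in> topspace X" "\<forall>d\<in>(\<Union>z\<in>W. F z). spec_le X d u"
  have "spec_le X z u" if "z \<in> W" for z
    using F[OF that] u that unfolding is_spec_sup_def by auto
  then show "spec_le X s u" using W u(1) unfolding is_spec_sup_def by simp
qed

text \<open>Each member of the family lies in a closed set containing its supremum, so by
  k-bounded sobriety a closed cover of the union also covers the index set.\<close>

lemma irreducible_in_UN:
  assumes t0: "t0_space X" and kb: "k_bounded_sober X"
    and W: "irreducible_in X W" "is_spec_sup X W s"
    and F: "\<And>z. z \<in> W \<Longrightarrow> irreducible_in X (F z)" "\<And>z. z \<in> W \<Longrightarrow> is_spec_sup X (F z) z"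
  shows "irreducible_in X (\<Union>z\<in>W. F z)"
  unfolding irreducible_in_def
proof (intro conjI allI impI)
  show "(\<Union>z\<in>W. F z) \<noteq> {}" using W(1) F(1) unfolding irreducible_in_def by auto
  show "(\<Union>z\<in>W. F z) \<subseteq> topspace X" using F(1) irreducible_in_subset_topspace by auto
  fix A1 A2 assume "closedin X A1 \<and> closedin X A2 \<and> (\<Union>z\<in>W. F z) \<subseteq> A1 \<union> A2"
  then have A: "closedin X A1" "closedin X A2" "(\<Union>z\<in>W. F z) \<subseteq> A1 \<union> A2" by auto
  have sup_in: "z \<in> A1 \<or> z \<in> A2" if "irreducible_in X E" "is_spec_sup X E z" "E \<subseteq> A1 \<or> E \<subseteq> A2"
    for E z
    using that spec_sup_in_closedin[OF t0 kb that(1,2)] A(1,2) by auto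
  have "z \<in> A1 \<union> A2" if z: "z \<in> W" for z
    using sup_in[OF F[OF z] irreducible_inD[OF F(1)[OF z] A(1,2)]] A(3) z by auto
  then have "s \<in> A1 \<or> s \<in> A2" using sup_in[OF W irreducible_inD[OF W(1) A(1,2)]] by auto
  moreover have "spec_le X d s" if "d \<in> (\<Union>z\<in>W. F z)" for d
    using that is_spec_sup_UN[OF W(2) F(2)] unfolding is_spec_sup_def by auto
  ultimately show "(\<Union>z\<in>W. F z) \<subseteq> A1 \<or> (\<Union>z\<in>W. F z) \<subseteq> A2"
    using spec_le_closedin[OF _ A(1)] spec_le_closedin[OF _ A(2)] by blast
qed

text \<open>In an Irr-continuous space the union of the sets of elements way below z, over all z way
  below s, is again irreducible with supremum s; hence it meets the upper set of e.\<close>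

lemma Irr_way_below_interpolate:
  assumes t0: "t0_space X" and kb: "k_bounded_sober X" and cont: "Irr_continuous X"
    and es: "Irr_way_below X e s"
  obtains w where "Irr_way_below X e w" and "Irr_way_below X w s"
proof -
  have s: "s \<in> topspace X" using Irr_way_below_topspace[OF es] by simp
  let ?W = "Irr_waydown X s"
  let ?D = "\<Union>z\<in>?W. Irr_waydown X z"
  have z: "z \<in> topspace X" if "z \<in> ?W" for z using that unfolding Irr_waydown_def by simp
  have D_sup: "is_spec_sup X ?D s"
    by (rule is_spec_sup_UN[OF Irr_continuousD(2)[OF cont s] Irr_continuousD(2)[OF cont z]])
  have "irreducible_in X ?D"
    by (rule irreducible_in_UN[OF t0 kb Irr_continuousD[OF cont s]
          Irr_continuousD(1)[OF cont z] Irr_continuousD(2)[OF cont z]])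
  with D_sup have "?D \<in> Irr_plus X" unfolding Irr_plus_def by auto
  then have "?D \<inter> spec_up X e \<noteq> {}"
    using es spec_le_refl[OF s] spec_sup_eq[OF t0 D_sup] unfolding Irr_way_below_def by auto
  then obtain z d where "z \<in> ?W" "d \<in> Irr_waydown X z" "spec_le X e d"
    unfolding spec_up_def by auto
  then have "Irr_way_below X e z" "Irr_way_below X z s"
    using spec_le_Irr_way_below_trans[of X e d z] unfolding Irr_waydown_def by auto
  then show ?thesis by (rule that)
qed

lemma irr_open_Irr_way_above:
  assumes t0: "t0_space X" and kb: "k_bounded_sober X" and cont: "Irr_continuous X"
  shows "irr_open X {z \<in> topspace X. Irr_way_below X e z}"
proof (rule irr_openI)
  show "v \<in> {z \<in> topspace X. Irr_way_below X e z}"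
    if "u \<in> {z \<in> topspace X. Irr_way_below X e z}" "spec_le X u v" for u v
    using that Irr_way_below_spec_le_trans[of X e u v] spec_le_topspace[OF that(2)] by simp
  fix E assume E: "E \<in> Irr_plus X" "spec_sup X E \<in> {z \<in> topspace X. Irr_way_below X e z}"
  then obtain w where w: "Irr_way_below X e w" "Irr_way_below X w (spec_sup X E)"
    using Irr_way_below_interpolate[OF t0 kb cont] by auto
  then have "E \<inter> spec_up X w \<noteq> {}"
    using E(1) spec_le_refl[of "spec_sup X E" X] unfolding Irr_way_below_def by auto
  then obtain e' where e': "e' \<in> E" "spec_le X w e'" unfolding spec_up_def by auto
  have "Irr_way_below X e e'" by (rule Irr_way_below_spec_le_trans[OF w(1) e'(2)])
  then show "E \<inter> {z \<in> topspace X. Irr_way_below X e z} \<noteq> {}"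
    using e'(1) Irr_way_below_topspace[of X e e'] by auto
qed auto

definition net_converges_in :: "'a topology \<Rightarrow> 'i set \<Rightarrow> ('i \<Rightarrow> 'i \<Rightarrow> bool) \<Rightarrow> ('i \<Rightarrow> 'a) \<Rightarrow> 'a \<Rightarrow> bool"
  where "net_converges_in \<sigma> I le f y \<longleftrightarrow>
    (\<forall>U. openin \<sigma> U \<and> y \<in> U \<longrightarrow> (\<exists>i0\<in>I. \<forall>i\<in>I. le i0 i \<longrightarrow> f i \<in> U))"

lemma Irr_conv_topological_iff:
  "Irr_conv_topological X TYPE('i) \<longleftrightarrow> (\<exists>\<sigma>. topspace \<sigma> = topspace X \<and>
     (\<forall>(I::'i set) le f y. is_net X I le f \<and> y \<in> topspace X \<longrightarrow>
        (Irr_converges X I le f y \<longleftrightarrow> net_converges_in \<sigma> I le f y)))"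
  by (simp add: Irr_conv_topological_def net_converges_in_def)

lemma net_converges_in_irr_topology_if_Irr_converges:
  assumes t0: "t0_space X" and conv: "Irr_converges X I le f y"
  shows "net_converges_in (irr_topology X) I le f y"
  unfolding net_converges_in_def openin_irr_topology[OF t0]
proof (intro allI impI)
  fix U assume U: "irr_open X U \<and> y \<in> U"
  obtain E where E: "E \<in> Irr_plus X" "spec_le X y (spec_sup X E)"
    and eventually_above: "\<forall>e\<in>E. \<exists>k\<in>I. \<forall>i\<in>I. le k i \<longrightarrow> spec_le X e (f i)"
    using conv unfolding Irr_converges_def by auto
  have "spec_sup X E \<in> U" using irr_openD(2)[of X U y] U E(2) by simp
  then obtain e where e: "e \<in> E" "e \<in> U" using irr_openD(3)[of X U E] U E(1) by auto
  then obtain k where "k \<in> I" "\<forall>i\<in>I. le k i \<longrightarrow> spec_le X e (f i)" using eventually_above by auto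
  then show "\<exists>i0\<in>I. \<forall>i\<in>I. le i0 i \<longrightarrow> f i \<in> U" using irr_openD(2)[of X U e] U e(2) by auto
qed

lemma Irr_converges_if_net_converges_in_irr_topology:
  assumes t0: "t0_space X" and kb: "k_bounded_sober X" and cont: "Irr_continuous X"
    and y: "y \<in> topspace X" and conv: "net_converges_in (irr_topology X) I le f y"
  shows "Irr_converges X I le f y"
  unfolding Irr_converges_def
proof (rule bexI[of _ "Irr_waydown X y"], intro conjI ballI)
  show "Irr_waydown X y \<in> Irr_plus X"
    using Irr_continuousD[OF cont y] unfolding Irr_plus_def by auto
  show "spec_le X y (spec_sup X (Irr_waydown X y))"
    using spec_sup_eq[OF t0 Irr_continuousD(2)[OF cont y]] spec_le_refl[OF y] by simp
  fix e assume "e \<in> Irr_waydown X y"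
  then have "irr_open X {z \<in> topspace X. Irr_way_below X e z}"
    and "y \<in> {z \<in> topspace X. Irr_way_below X e z}"
    using irr_open_Irr_way_above[OF t0 kb cont] y unfolding Irr_waydown_def by auto
  then obtain k where "k \<in> I" "\<forall>i\<in>I. le k i \<longrightarrow> Irr_way_below X e (f i)"
    using conv unfolding net_converges_in_def openin_irr_topology[OF t0] by blast
  then show "\<exists>k\<in>I. \<forall>i\<in>I. le k i \<longrightarrow> spec_le X e (f i)"
    using Irr_way_below_imp_spec_le[OF t0] by blast
qed

lemma Irr_conv_topological_if_Irr_continuous:
  assumes "t0_space X" and "k_bounded_sober X" and "Irr_continuous X"
  shows "Irr_conv_topological X TYPE('i)"
  unfolding Irr_conv_topological_iff
  using topspace_irr_topology[OF assms(1)] net_converges_in_irr_topology_if_Irr_converges[OF assms(1)]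
    Irr_converges_if_net_converges_in_irr_topology[OF assms]
  by blast

section \<open>Irr-continuity from topological Irr-convergence\<close>

lemma Irr_way_below_if_below_irr_open:
  assumes U: "irr_open X U" "x \<in> U" and e: "e \<in> topspace X" "\<forall>u\<in>U. spec_le X e u"
  shows "Irr_way_below X e x"
  unfolding Irr_way_below_def
proof (intro conjI ballI impI e(1))
  show "x \<in> topspace X" using irr_openD(1)[OF U(1)] U(2) by auto
  fix E assume E: "E \<in> Irr_plus X" "spec_le X x (spec_sup X E)"
  then have "E \<inter> U \<noteq> {}" using irr_openD(2,3)[OF U(1)] U(2) by blast
  then show "E \<inter> spec_up X e \<noteq> {}"
    using e(2) spec_le_topspace unfolding spec_up_def by fastforce
qed

lemma Irr_continuous_at_if_Irr_plus_subset_Irr_waydown: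
  assumes t0: "t0_space X" and kb: "k_bounded_sober X"
    and E: "E \<in> Irr_plus X" "spec_le X x (spec_sup X E)" "E \<subseteq> Irr_waydown X x"
  shows "irreducible_in X (Irr_waydown X x)" and "is_spec_sup X (Irr_waydown X x) x"
proof -
  obtain s where s: "is_spec_sup X E s" and irr: "irreducible_in X E"
    using E(1) unfolding Irr_plus_def by auto
  have x: "x \<in> topspace X" and xs: "spec_le X x s"
    using E(2) spec_sup_eq[OF t0 s] spec_le_topspace[OF E(2)] by auto
  have below_x: "spec_le X w x" if "w \<in> Irr_waydown X x" for w
    using that Irr_way_below_imp_spec_le[OF t0] unfolding Irr_waydown_def by auto
  show "is_spec_sup X (Irr_waydown X x) x"
    unfolding is_spec_sup_def
  proof (intro conjI ballI impI x below_x)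
    fix u assume u: "u \<in> topspace X" "\<forall>w\<in>Irr_waydown X x. spec_le X w u"
    then have "\<forall>e\<in>E. spec_le X e u" using E(3) by auto
    then have "spec_le X s u" using s u(1) unfolding is_spec_sup_def by auto
    then show "spec_le X x u" by (rule spec_le_trans[OF xs])
  qed
  have "X closure_of Irr_waydown X x \<subseteq> X closure_of {x}"
    using spec_upper_bound_iff_closure_of[OF Irr_waydown_subset_topspace x] below_x by auto
  also have "\<dots> \<subseteq> X closure_of {s}"
    using xs closure_of_singleton_mono[of x X s] unfolding spec_le_def by auto
  also have "\<dots> \<subseteq> X closure_of E"
    using spec_sup_in_closedin[OF t0 kb irr s closedin_closure_of
        closure_of_subset[OF irreducible_in_subset_topspace[OF irr]]]
    by (intro closure_of_minimal) auto
  finally have "X closure_of Irr_waydown X x = X closure_of E"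
    using closure_of_mono[OF E(3)] by auto
  then show "irreducible_in X (Irr_waydown X x)"
    by (rule irreducible_in_closure_of_eq[OF irr Irr_waydown_subset_topspace])
qed

text \<open>Nets indexed by the type of sets of sets of points suffice: a pointed set (U, u) with
  u \<in> U is encoded as {U, {u}}, whose union is U and whose intersection is {u}.\<close>

definition point_of :: "'a set set \<Rightarrow> 'a" where
  "point_of a = the_elem (\<Inter>a)"

lemma point_of_pointed_set [simp]: "u \<in> U \<Longrightarrow> point_of {U, {u}} = u"
  unfolding point_of_def by (simp add: Int_absorb1)

context
  fixes X \<sigma> :: "'a topology"
  assumes t0: "t0_space X"
    and topspace_eq: "topspace \<sigma> = topspace X"
    and Irr_converges_iff: "\<And>(I :: 'a set set set) le f y. is_net X I le f \<Longrightarrow> y \<in> topspace X \<Longrightarrow>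
      Irr_converges X I le f y \<longleftrightarrow> net_converges_in \<sigma> I le f y"
begin

lemma Irr_conv_openin_upper:
  assumes U: "openin \<sigma> U" "v \<in> U" and vu: "spec_le X v u"
  shows "u \<in> U"
proof -
  have v: "v \<in> topspace X" and u: "u \<in> topspace X" using spec_le_topspace[OF vu] by auto
  let ?I = "{{}} :: 'a set set set"
  have net: "is_net X ?I (\<lambda>_ _. True) (\<lambda>_. u)" unfolding is_net_def using u by auto
  have "Irr_converges X ?I (\<lambda>_ _. True) (\<lambda>_. u) v"
    unfolding Irr_converges_def
    using singleton_in_Irr_plus[OF v] spec_sup_eq[OF t0 singleton_in_Irr_plus(2)[OF v]]
      spec_le_refl[OF v] vu by (intro bexI[of _ "{v}"]) auto
  then show ?thesis using Irr_converges_iff[OF net v] U unfolding net_converges_in_def by auto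
qed

lemma Irr_conv_openin_Irr_inaccessible:
  assumes U: "openin \<sigma> U" "spec_sup X E \<in> U" and E: "E \<in> Irr_plus X"
  shows "E \<inter> U \<noteq> {}"
proof -
  obtain s where s: "is_spec_sup X E s" and irr: "irreducible_in X E"
    using E unfolding Irr_plus_def by auto
  have Et: "E \<subseteq> topspace X" by (rule irreducible_in_subset_topspace[OF irr])
  have ss: "spec_sup X E = s" by (rule spec_sup_eq[OF t0 s])
  have st: "s \<in> topspace X" using s unfolding is_spec_sup_def by simp
  define I :: "'a set set set" where "I = (\<lambda>e. {{e}}) ` E"
  define le where "le a b \<longleftrightarrow> spec_le X (point_of a) (point_of b)" for a b :: "'a set set"
  have point: "point_of {{e}} = e" for e :: 'a by (simp add: point_of_def)
  have net: "is_net X I le point_of"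
    unfolding is_net_def le_def I_def using Et spec_le_refl[of _ X] spec_le_trans[of X] point by auto
  have "Irr_converges X I le point_of s"
    unfolding Irr_converges_def
  proof (rule bexI[OF _ E], intro conjI ballI)
    show "spec_le X s (spec_sup X E)" using ss spec_le_refl[OF st] by simp
    show "\<exists>k\<in>I. \<forall>i\<in>I. le k i \<longrightarrow> spec_le X e (point_of i)" if "e \<in> E" for e
      using that point unfolding I_def le_def by auto
  qed
  then obtain i0 where i0: "i0 \<in> I" "\<forall>i\<in>I. le i0 i \<longrightarrow> point_of i \<in> U"
    using Irr_converges_iff[OF net st] U ss unfolding net_converges_in_def by auto
  moreover have "le i0 i0" using net i0(1) unfolding is_net_def by simp
  ultimately have "point_of i0 \<in> U" by simp
  moreover obtain e where "e \<in> E" "i0 = {{e}}" using i0(1) unfolding I_def by auto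
  ultimately show ?thesis using point[of e] by auto
qed

lemma Irr_conv_openin_imp_irr_open: "openin \<sigma> U \<Longrightarrow> irr_open X U"
  by (rule irr_openI)
    (use openin_subset[of \<sigma> U] topspace_eq Irr_conv_openin_upper
      Irr_conv_openin_Irr_inaccessible in auto)

text \<open>The net of all pointed open neighbourhoods of x, ordered by reverse inclusion of the
  neighbourhoods, converges to x; the set witnessing its Irr-convergence lies way below x.\<close>

lemma Irr_continuous_if_Irr_conv_topology_witness:
  assumes kb: "k_bounded_sober X"
  shows "Irr_continuous X"
  unfolding Irr_continuous_def
proof
  fix x assume x: "x \<in> topspace X"
  define I where "I = {{U, {u}} | U u. openin \<sigma> U \<and> x \<in> U \<and> u \<in> U}"
  define le where "le a b \<longleftrightarrow> \<Union>b \<subseteq> \<Union>a" for a b :: "'a set set"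
  have net: "is_net X I le point_of"
    unfolding is_net_def le_def I_def
    using openin_subset[of \<sigma>] topspace_eq by fastforce
  have "net_converges_in \<sigma> I le point_of x"
    unfolding net_converges_in_def
  proof (intro allI impI)
    fix U assume U: "openin \<sigma> U \<and> x \<in> U"
    then have "{U, {x}} \<in> I" unfolding I_def by auto
    moreover have "point_of i \<in> U" if "i \<in> I" "le {U, {x}} i" for i
      using that U unfolding I_def le_def by auto
    ultimately show "\<exists>i0\<in>I. \<forall>i\<in>I. le i0 i \<longrightarrow> point_of i \<in> U" by blast
  qed
  then obtain E where E: "E \<in> Irr_plus X" "spec_le X x (spec_sup X E)"
    and eventually_above: "\<forall>e\<in>E. \<exists>k\<in>I. \<forall>i\<in>I. le k i \<longrightarrow> spec_le X e (point_of i)"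
    using Irr_converges_iff[OF net x] unfolding Irr_converges_def by auto
  have "E \<subseteq> Irr_waydown X x"
  proof
    fix e assume e: "e \<in> E"
    then have et: "e \<in> topspace X"
      using E(1) irreducible_in_subset_topspace unfolding Irr_plus_def by auto
    obtain U u where U: "openin \<sigma> U" "x \<in> U" "u \<in> U"
      and above: "\<forall>i\<in>I. le {U, {u}} i \<longrightarrow> spec_le X e (point_of i)"
      using eventually_above e unfolding I_def by auto
    have "spec_le X e v" if "v \<in> U" for v
      using above[rule_format, of "{U, {v}}"] U that unfolding I_def le_def by auto
    then have "Irr_way_below X e x"
      using Irr_way_below_if_below_irr_open[OF Irr_conv_openin_imp_irr_open[OF U(1)] U(2) et] by blast
    then show "e \<in> Irr_waydown X x" unfolding Irr_waydown_def using et by simp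
  qed
  then show "irreducible_in X (Irr_waydown X x) \<and> is_spec_sup X (Irr_waydown X x) x"
    using Irr_continuous_at_if_Irr_plus_subset_Irr_waydown[OF t0 kb E] by simp
qed

end

lemma Irr_continuous_if_Irr_conv_topological:
  fixes X :: "'a topology"
  assumes "t0_space X" and "k_bounded_sober X" and "Irr_conv_topological X TYPE('a set set)"
  shows "Irr_continuous X"
proof -
  from assms(3) obtain \<sigma> :: "'a topology" where "topspace \<sigma> = topspace X \<and>
      (\<forall>(I :: 'a set set set) le f y. is_net X I le f \<and> y \<in> topspace X \<longrightarrow>
        (Irr_converges X I le f y \<longleftrightarrow> net_converges_in \<sigma> I le f y))"
    unfolding Irr_conv_topological_iff by (rule exE)
  then show ?thesis
    by (intro Irr_continuous_if_Irr_conv_topology_witness[OF assms(1)] assms(2)) auto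
qed

theorem theorem1p1:
  fixes X :: "'a topology"
  assumes "t0_space X" and "k_bounded_sober X"
  shows "(Irr_conv_topological X TYPE('a set set) \<longleftrightarrow> Irr_continuous X) \<and>
         (Irr_continuous X \<longrightarrow> Irr_conv_topological X TYPE('i))"
proof -
  have "Irr_conv_topological X TYPE('a set set) \<Longrightarrow> Irr_continuous X"
    by (rule Irr_continuous_if_Irr_conv_topological[OF assms])
  moreover have "Irr_continuous X \<Longrightarrow> Irr_conv_topological X TYPE('a set set)"
    by (rule Irr_conv_topological_if_Irr_continuous[OF assms])
  moreover have "Irr_continuous X \<Longrightarrow> Irr_conv_topological X TYPE('i)"
    by (rule Irr_conv_topological_if_Irr_continuous[OF assms])
  ultimately show ?thesis by blast
qed

end
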